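(* For every hypergraph $\mathcal{H}=(Q,\mathcal{S})$ with all hyperedges nonempty and $S_n=Q$, the graph $G_{\mathcal{H}}$ is $(2P_1+2P_2)$-free, $3P_2$-free and $2P_3$-free.
   Context: A hypergraph $\mathcal{H}=(Q,\mathcal{S})$ has element set $Q=\{q_1,\dots,q_m\}$ and hyperedges $\mathcal{S}=\{S_1,\dots,S_n\}$, $S_j\subseteq Q$. The graph $G_{\mathcal{H}}$ has vertex set $Q\cup\mathcal{S}\cup\mathcal{S}'\cup\{t_1,t_2\}$, where $\mathcal{S}'=\{S_1',\dots,S_n'\}$ is a set of $n$ new vertices, and edges: $q_iS_j$ and $q_iS_j'$ whenever $q_i\in S_j$; $S_jS_\ell'$ for all $j,\ell\in\{1,\dots,n\}$; $q_hq_i$ for all distinct $h,i$ (so $Q$ is a clique); $t_1S_j$ and $t_2S_j'$ for all $j$. There are no other edges. $+$ denotes disjoint union, $sG$ the disjoint union of $s$ copies of $G$, $P_r$ the path on $r$ vertices; $H$-free means no induced subgraph isomorphic to $H$. *)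

theory Defs
  imports Main
begin

type_synonym 'a graph = "'a set \<times> ('a \<Rightarrow> 'a \<Rightarrow> bool)"

definition path_graph :: "nat \<Rightarrow> nat graph" where
  "path_graph r = ({0..<r}, \<lambda>i j. i + 1 = j \<or> j + 1 = i)"

definition gunion :: "'a graph \<Rightarrow> 'b graph \<Rightarrow> ('a + 'b) graph" where
  "gunion G H = (Inl ` fst G \<union> Inr ` fst H,
     \<lambda>x y. case (x, y) of
        (Inl a, Inl b) \<Rightarrow> snd G a b
      | (Inr a, Inr b) \<Rightarrow> snd H a b
      | _ \<Rightarrow> False)"

definition has_induced :: "'a graph \<Rightarrow> 'b graph \<Rightarrow> bool" where
  "has_induced G H \<longleftrightarrow> (\<exists>f. inj_on f (fst H) \<and> f ` fst H \<subseteq> fst G \<and>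
     (\<forall>u\<in>fst H. \<forall>v\<in>fst H. u \<noteq> v \<longrightarrow> (snd H u v \<longleftrightarrow> snd G (f u) (f v))))"

definition H_free :: "'b graph \<Rightarrow> 'a graph \<Rightarrow> bool" where
  "H_free H G \<longleftrightarrow> \<not> has_induced G H"

datatype 'a vtx = QV 'a | SV nat | SV' nat | T1 | T2

text \<open>Hypergraph with element set Q and hyperedges S 1, ..., S n.\<close>
definition GH_base :: "'a set \<Rightarrow> (nat \<Rightarrow> 'a set) \<Rightarrow> nat \<Rightarrow> 'a vtx \<Rightarrow> 'a vtx \<Rightarrow> bool" where
  "GH_base Q S n x y = (case (x, y) of
      (QV a, SV j) \<Rightarrow> a \<in> Q \<and> j \<in> {1..n} \<and> a \<in> S j
    | (QV a, SV' j) \<Rightarrow> a \<in> Q \<and> j \<in> {1..n} \<and> a \<in> S j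
    | (SV j, SV' l) \<Rightarrow> j \<in> {1..n} \<and> l \<in> {1..n}
    | (QV a, QV b) \<Rightarrow> a \<in> Q \<and> b \<in> Q \<and> a \<noteq> b
    | (T1, SV j) \<Rightarrow> j \<in> {1..n}
    | (T2, SV' j) \<Rightarrow> j \<in> {1..n}
    | _ \<Rightarrow> False)"

definition G_hyp :: "'a set \<Rightarrow> (nat \<Rightarrow> 'a set) \<Rightarrow> nat \<Rightarrow> 'a vtx graph" where
  "G_hyp Q S n = (QV ` Q \<union> SV ` {1..n} \<union> SV' ` {1..n} \<union> {T1, T2},
     \<lambda>x y. GH_base Q S n x y \<or> GH_base Q S n y x)"

end

theory Submission imports Defs begin

text \<open>
  The element vertices Q form a clique, and the complete join between the hyperedge vertices
  S and their copies S' forces every induced 2P2 of G_H to have one of its two edges inside Q.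
  A clique contains at most one edge of an induced matching, so 3P2 and 2P3 cannot occur.
  In a 2P1 + 2P2 one edge therefore contains some q in Q, and everything else lies among the
  non-neighbours of q: t1, t2 and the vertices S_j, S_j' of the hyperedges missing q. There
  every edge is adjacent to all vertices but at most one (t1 or t2), leaving no room for the
  two isolated vertices.
\<close>

lemma fst_gunion [simp]: "fst (gunion G H) = Inl ` fst G \<union> Inr ` fst H"
  by (simp add: gunion_def)

lemma snd_gunion [simp]:
  "snd (gunion G H) (Inl a) (Inl b) = snd G a b"
  "snd (gunion G H) (Inr c) (Inr d) = snd H c d"
  "snd (gunion G H) (Inl a) (Inr d) = False"
  "snd (gunion G H) (Inr c) (Inl b) = False"
  by (simp_all add: gunion_def)

lemma fst_path_graph [simp]: "fst (path_graph r) = {0..<r}"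
  by (simp add: path_graph_def)

lemma snd_path_graph [simp]: "snd (path_graph r) i j \<longleftrightarrow> i + 1 = j \<or> j + 1 = i"
  by (simp add: path_graph_def)

definition induced_embedding :: "('b \<Rightarrow> 'a) \<Rightarrow> 'b graph \<Rightarrow> 'a graph \<Rightarrow> bool" where
  "induced_embedding f H G \<longleftrightarrow> inj_on f (fst H) \<and> f ` fst H \<subseteq> fst G \<and>
     (\<forall>u\<in>fst H. \<forall>v\<in>fst H. u \<noteq> v \<longrightarrow> (snd H u v \<longleftrightarrow> snd G (f u) (f v)))"

lemma has_induced_iff_induced_embedding: "has_induced G H \<longleftrightarrow> (\<exists>f. induced_embedding f H G)"
  by (simp add: has_induced_def induced_embedding_def)

lemma induced_embedding_mem: "induced_embedding f H G \<Longrightarrow> u \<in> fst H \<Longrightarrow> f u \<in> fst G"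
  by (auto simp: induced_embedding_def)

lemma induced_embedding_eq_iff:
  "induced_embedding f H G \<Longrightarrow> u \<in> fst H \<Longrightarrow> v \<in> fst H \<Longrightarrow> f u = f v \<longleftrightarrow> u = v"
  by (auto simp: induced_embedding_def inj_on_eq_iff)

lemma induced_embedding_adj_iff:
  "induced_embedding f H G \<Longrightarrow> u \<in> fst H \<Longrightarrow> v \<in> fst H \<Longrightarrow> u \<noteq> v \<Longrightarrow>
    snd G (f u) (f v) \<longleftrightarrow> snd H u v"
  by (simp add: induced_embedding_def)

definition induced_2K2 :: "'a graph \<Rightarrow> 'a \<Rightarrow> 'a \<Rightarrow> 'a \<Rightarrow> 'a \<Rightarrow> bool" where
  "induced_2K2 G a b c d \<longleftrightarrow> {a, b, c, d} \<subseteq> fst G \<and> distinct [a, b, c, d] \<and>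
     snd G a b \<and> snd G c d \<and> \<not> snd G a c \<and> \<not> snd G a d \<and> \<not> snd G b c \<and> \<not> snd G b d"

lemma induced_embedding_2K2:
  assumes emb: "induced_embedding f H G" and "induced_2K2 H a b c d"
  shows "induced_2K2 G (f a) (f b) (f c) (f d)"
  using assms(2)
  by (simp add: induced_2K2_def induced_embedding_mem[OF emb] induced_embedding_eq_iff[OF emb]
      induced_embedding_adj_iff[OF emb])

lemma has_induced_3P2_E:
  assumes "has_induced G (gunion (path_graph 2) (gunion (path_graph 2) (path_graph 2)))"
  obtains x1 x2 x3 x4 x5 x6 where "induced_2K2 G x1 x2 x3 x4" "induced_2K2 G x1 x2 x5 x6"
    "induced_2K2 G x3 x4 x5 x6"
proof -
  obtain f where emb: "induced_embedding f (gunion (path_graph 2) (gunion (path_graph 2) (path_graph 2))) G"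
    using assms by (auto simp: has_induced_iff_induced_embedding)
  show thesis
    by (rule that[of "f (Inl 0)" "f (Inl 1)" "f (Inr (Inl 0))" "f (Inr (Inl 1))"
          "f (Inr (Inr 0))" "f (Inr (Inr 1))"];
        rule induced_embedding_2K2[OF emb]; simp add: induced_2K2_def)
qed

lemma has_induced_2P3_E:
  assumes "has_induced G (gunion (path_graph 3) (path_graph 3))"
  obtains a b c d e g where "induced_2K2 G a b d e" "induced_2K2 G a b e g" "induced_2K2 G b c d e"
    "a \<noteq> c" "\<not> snd G a c" "d \<noteq> g" "\<not> snd G d g"
proof -
  obtain f where emb: "induced_embedding f (gunion (path_graph 3) (path_graph 3)) G"
    using assms by (auto simp: has_induced_iff_induced_embedding)
  \<comment> \<open>the parameters of \<open>that\<close> are ordered by first occurrence: a b d e g c\<close>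
  show thesis
    by (rule that[of "f (Inl 0)" "f (Inl 1)" "f (Inr 0)" "f (Inr 1)" "f (Inr 2)" "f (Inl 2)"];
        (rule induced_embedding_2K2[OF emb])?;
        simp add: induced_2K2_def induced_embedding_eq_iff[OF emb] induced_embedding_adj_iff[OF emb])
qed

lemma has_induced_2P1_2P2_E:
  assumes "has_induced G (gunion (gunion (path_graph 1) (path_graph 1))
                               (gunion (path_graph 2) (path_graph 2)))"
  obtains a b c d i1 i2 where "induced_2K2 G a b c d" "induced_2K2 G c d a b"
    "i1 \<in> fst G" "i2 \<in> fst G" "i1 \<noteq> i2"
    "\<forall>i\<in>{i1, i2}. \<forall>v\<in>{a, b, c, d}. i \<noteq> v \<and> \<not> snd G i v \<and> \<not> snd G v i"
proof -
  obtain f where emb: "induced_embedding f (gunion (gunion (path_graph 1) (path_graph 1))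
                               (gunion (path_graph 2) (path_graph 2))) G"
    using assms by (auto simp: has_induced_iff_induced_embedding)
  show thesis
    by (rule that[of "f (Inr (Inl 0))" "f (Inr (Inl 1))" "f (Inr (Inr 0))" "f (Inr (Inr 1))"
          "f (Inl (Inl 0))" "f (Inl (Inr 0))"];
        (rule induced_embedding_2K2[OF emb])?;
        auto simp add: induced_2K2_def induced_embedding_mem[OF emb] induced_embedding_eq_iff[OF emb]
          induced_embedding_adj_iff[OF emb])
qed

definition clique_meets_every_2K2 :: "'a graph \<Rightarrow> 'a set \<Rightarrow> bool" where
  "clique_meets_every_2K2 G K \<longleftrightarrow> (\<forall>x\<in>K. \<forall>y\<in>K. x \<noteq> y \<longrightarrow> snd G x y) \<and>
     (\<forall>a b c d. induced_2K2 G a b c d \<longrightarrow> {a, b} \<subseteq> K \<or> {c, d} \<subseteq> K)"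

lemma clique_meets_every_2K2_3P2_free:
  assumes "clique_meets_every_2K2 G K"
  shows "H_free (gunion (path_graph 2) (gunion (path_graph 2) (path_graph 2))) G"
  unfolding H_free_def
proof
  assume "has_induced G (gunion (path_graph 2) (gunion (path_graph 2) (path_graph 2)))"
  then obtain x1 x2 x3 x4 x5 x6 where "induced_2K2 G x1 x2 x3 x4" "induced_2K2 G x1 x2 x5 x6"
    "induced_2K2 G x3 x4 x5 x6"
    by (rule has_induced_3P2_E)
  \<comment> \<open>two of the three edges would lie in the clique K\<close>
  with assms show False
    unfolding clique_meets_every_2K2_def induced_2K2_def by (metis distinct_length_2_or_more insert_subset)
qed

lemma clique_meets_every_2K2_2P3_free:
  assumes "clique_meets_every_2K2 G K"
  shows "H_free (gunion (path_graph 3) (path_graph 3)) G"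
  unfolding H_free_def
proof
  have clique: "\<And>x y. x \<in> K \<Longrightarrow> y \<in> K \<Longrightarrow> x \<noteq> y \<Longrightarrow> snd G x y"
    and meets: "\<And>a b c d. induced_2K2 G a b c d \<Longrightarrow> {a, b} \<subseteq> K \<or> {c, d} \<subseteq> K"
    using assms unfolding clique_meets_every_2K2_def by blast+
  assume "has_induced G (gunion (path_graph 3) (path_graph 3))"
  then obtain a b c d e g where abde: "induced_2K2 G a b d e" and abeg: "induced_2K2 G a b e g"
    and bcde: "induced_2K2 G b c d e" and "a \<noteq> c" "\<not> snd G a c" "d \<noteq> g" "\<not> snd G d g"
    by (rule has_induced_2P3_E)
  have "\<not> {a, b} \<subseteq> K"
  proof
    assume "{a, b} \<subseteq> K"
    with meets[OF bcde] abde \<open>a \<noteq> c\<close> \<open>\<not> snd G a c\<close> show False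
      unfolding induced_2K2_def using clique by auto
  qed
  with meets[OF abde] meets[OF abeg] have "d \<in> K" "g \<in> K"
    by auto
  with clique \<open>d \<noteq> g\<close> \<open>\<not> snd G d g\<close> show False
    by blast
qed

lemma mem_fst_G_hyp [simp]:
  "QV a \<in> fst (G_hyp Q S n) \<longleftrightarrow> a \<in> Q"
  "SV j \<in> fst (G_hyp Q S n) \<longleftrightarrow> j \<in> {1..n}"
  "SV' j \<in> fst (G_hyp Q S n) \<longleftrightarrow> j \<in> {1..n}"
  "T1 \<in> fst (G_hyp Q S n)" "T2 \<in> fst (G_hyp Q S n)"
  by (auto simp: G_hyp_def)

lemma snd_G_hyp: "snd (G_hyp Q S n) x y \<longleftrightarrow> GH_base Q S n x y \<or> GH_base Q S n y x"
  by (simp add: G_hyp_def)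

lemma GH_base_simps [simp]:
  "GH_base Q S n (QV a) (QV b) \<longleftrightarrow> a \<in> Q \<and> b \<in> Q \<and> a \<noteq> b"
  "GH_base Q S n (QV a) (SV j) \<longleftrightarrow> a \<in> Q \<and> j \<in> {1..n} \<and> a \<in> S j"
  "GH_base Q S n (QV a) (SV' j) \<longleftrightarrow> a \<in> Q \<and> j \<in> {1..n} \<and> a \<in> S j"
  "GH_base Q S n (SV j) (SV' l) \<longleftrightarrow> j \<in> {1..n} \<and> l \<in> {1..n}"
  "GH_base Q S n T1 (SV j) \<longleftrightarrow> j \<in> {1..n}"
  "GH_base Q S n T2 (SV' j) \<longleftrightarrow> j \<in> {1..n}"
  "GH_base Q S n (QV a) T1 = False" "GH_base Q S n (QV a) T2 = False"
  "GH_base Q S n (SV j) (QV b) = False" "GH_base Q S n (SV j) (SV l) = False"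
  "GH_base Q S n (SV j) T1 = False" "GH_base Q S n (SV j) T2 = False"
  "GH_base Q S n (SV' j) y = False"
  "GH_base Q S n T1 (QV b) = False" "GH_base Q S n T1 (SV' l) = False"
  "GH_base Q S n T1 T1 = False" "GH_base Q S n T1 T2 = False"
  "GH_base Q S n T2 (QV b) = False" "GH_base Q S n T2 (SV l) = False"
  "GH_base Q S n T2 T1 = False" "GH_base Q S n T2 T2 = False"
  by (simp_all add: GH_base_def split: vtx.split)

lemma G_hyp_QV_clique:
  "x \<in> QV ` Q \<Longrightarrow> y \<in> QV ` Q \<Longrightarrow> x \<noteq> y \<Longrightarrow> snd (G_hyp Q S n) x y"
  by (auto simp: snd_G_hyp)

text \<open>
  An edge outside Q has an end in S or in S'. As S and S' are completely joined, two
  non-adjacent such edges lie on the same side, say in Q, S and t1; there they are joined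
  through the clique Q or through t1.
\<close>
lemma G_hyp_induced_2K2_in_QV:
  assumes "induced_2K2 (G_hyp Q S n) a b c d"
  shows "{a, b} \<subseteq> QV ` Q \<or> {c, d} \<subseteq> QV ` Q"
  using assms unfolding induced_2K2_def snd_G_hyp
  by (cases a; cases b; simp add: image_iff; cases c; cases d; simp add: image_iff)

definition non_neighbours :: "'a graph \<Rightarrow> 'a \<Rightarrow> 'a set" where
  "non_neighbours G v = {u \<in> fst G. u \<noteq> v \<and> \<not> snd G v u}"

lemma G_hyp_non_neighbours_QV:
  assumes "q \<in> Q" "{c, d, x, y} \<subseteq> non_neighbours (G_hyp Q S n) (QV q)"
    and "snd (G_hyp Q S n) c d"
    and "\<not> snd (G_hyp Q S n) x c" "\<not> snd (G_hyp Q S n) x d"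
    and "\<not> snd (G_hyp Q S n) y c" "\<not> snd (G_hyp Q S n) y d"
  shows "x = y"
  using assms unfolding non_neighbours_def snd_G_hyp
  by (cases c; cases d; simp; cases x; cases y; simp)

lemma G_hyp_clique_meets_every_2K2: "clique_meets_every_2K2 (G_hyp Q S n) (QV ` Q)"
  unfolding clique_meets_every_2K2_def
  by (intro conjI ballI impI allI G_hyp_QV_clique G_hyp_induced_2K2_in_QV)

lemma G_hyp_2P1_2P2_free:
  "H_free (gunion (gunion (path_graph 1) (path_graph 1)) (gunion (path_graph 2) (path_graph 2)))
     (G_hyp Q S n)"
  unfolding H_free_def
proof
  let ?G = "G_hyp Q S n"
  assume "has_induced ?G (gunion (gunion (path_graph 1) (path_graph 1))
                               (gunion (path_graph 2) (path_graph 2)))"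
  then obtain a b c d i1 i2 where matching: "induced_2K2 ?G a b c d" "induced_2K2 ?G c d a b"
    and i: "i1 \<in> fst ?G" "i2 \<in> fst ?G" "i1 \<noteq> i2"
      "\<forall>i\<in>{i1, i2}. \<forall>v\<in>{a, b, c, d}. i \<noteq> v \<and> \<not> snd ?G i v \<and> \<not> snd ?G v i"
    by (rule has_induced_2P1_2P2_E)
  have no_QV_edge_beside: False
    if edges: "induced_2K2 ?G a' b' c' d'" and "a' \<in> QV ` Q"
      and isolated: "\<forall>i\<in>{i1, i2}. \<forall>v\<in>{a', c', d'}. i \<noteq> v \<and> \<not> snd ?G i v \<and> \<not> snd ?G v i"
    for a' b' c' d'
  proof -
    obtain q where q: "q \<in> Q" "a' = QV q"
      using \<open>a' \<in> QV ` Q\<close> by blast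
    have "c' \<in> non_neighbours ?G a'" "d' \<in> non_neighbours ?G a'"
      using edges unfolding induced_2K2_def non_neighbours_def by auto
    moreover have "i1 \<in> non_neighbours ?G a'" "i2 \<in> non_neighbours ?G a'"
      using isolated i(1,2) unfolding non_neighbours_def by auto
    ultimately have "{c', d', i1, i2} \<subseteq> non_neighbours ?G a'"
      by simp
    moreover have "snd ?G c' d'"
      using edges by (simp add: induced_2K2_def)
    moreover have "\<not> snd ?G i1 c'" "\<not> snd ?G i1 d'" "\<not> snd ?G i2 c'" "\<not> snd ?G i2 d'"
      using isolated by simp_all
    ultimately have "i1 = i2"
      unfolding q(2) by (rule G_hyp_non_neighbours_QV[OF q(1)])
    with i(3) show False ..
  qed
  have isolated_acd: "\<forall>i\<in>{i1, i2}. \<forall>v\<in>{a, c, d}. i \<noteq> v \<and> \<not> snd ?G i v \<and> \<not> snd ?G v i"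
    and isolated_cab: "\<forall>i\<in>{i1, i2}. \<forall>v\<in>{c, a, b}. i \<noteq> v \<and> \<not> snd ?G i v \<and> \<not> snd ?G v i"
    using i(4) by blast+
  from G_hyp_induced_2K2_in_QV[OF matching(1)] show False
  proof
    assume "{a, b} \<subseteq> QV ` Q"
    then show False
      by (intro no_QV_edge_beside[OF matching(1) _ isolated_acd]) simp
  next
    assume "{c, d} \<subseteq> QV ` Q"
    then show False
      by (intro no_QV_edge_beside[OF matching(2) _ isolated_cab]) simp
  qed
qed

theorem lemma28:
  fixes Q :: "'a set" and S :: "nat \<Rightarrow> 'a set" and n :: nat
  assumes "finite Q" and "n \<ge> 1"
    and "\<forall>j\<in>{1..n}. S j \<subseteq> Q \<and> S j \<noteq> {}"
    and "S n = Q"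
  shows "H_free (gunion (gunion (path_graph 1) (path_graph 1))
                        (gunion (path_graph 2) (path_graph 2))) (G_hyp Q S n)
       \<and> H_free (gunion (path_graph 2) (gunion (path_graph 2) (path_graph 2))) (G_hyp Q S n)
       \<and> H_free (gunion (path_graph 3) (path_graph 3)) (G_hyp Q S n)"
  by (intro conjI G_hyp_2P1_2P2_free clique_meets_every_2K2_3P2_free[OF G_hyp_clique_meets_every_2K2]
      clique_meets_every_2K2_2P3_free[OF G_hyp_clique_meets_every_2K2])

end
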